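(* For all integers $n\ge 2$ and $M\ge 1$, $C_{CD}(n,M)\ge C_{AD}(n,M)\ge \frac{n}{2}\log_2 M$.
   Context: There are $n$ nodes labeled $1,\dots,n$; node $i$ privately holds an input $x_i\in\{1,\dots,M\}$. Communication is over private point-to-point links of a fully connected synchronous network. A deterministic protocol $P$ is a fixed finite schedule of steps $l=1,\dots,L(P)$; in step $l$ a prescribed node $T_l$ sends to a prescribed node $R_l\neq T_l$ one symbol $f_l(x_{T_l},T_l^+(l))$, where $T_l^+(l)$ is the sequence of symbols $T_l$ has received in steps $1,\dots,l-1$; only $R_l$ receives it. Its complexity is $C(P)=\sum_{l}\log_2 S_l(P)$, with $S_l(P)$ the number of distinct values of the step-$l$ symbol over all inputs in $\{1,\dots,M\}^n$. At the end each node $i$ outputs a bit $EQ_i$ depending on $x_i$ and the symbols it received. $P$ solves MEQ-AD$(n,M)$ if for every input, $EQ_1=\cdots=EQ_n=0$ iff $x_1=\cdots=x_n$; $P$ solves MEQ-CD$(n,M)$ if for every input, $EQ_n=0$ iff $x_1=\cdots=x_n$. $C_{AD}(n,M)$ and $C_{CD}(n,M)$ are the infima of $C(P)$ over protocols solving MEQ-AD$(n,M)$, respectively MEQ-CD$(n,M)$. *)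

theory Defs
  imports Complex_Main "HOL-Library.FuncSet"
begin

text \<open>A deterministic protocol: a fixed schedule of len steps, indexed 0..len-1
  (step l here is step l+1 of the paper). In step l node tx l sends to node rx l
  the symbol msg l (x (tx l)) (symbols received so far by tx l, in order).
  Symbols are natural numbers (any finite symbol alphabet can be relabelled).\<close>
record protocol =
  len :: nat
  tx  :: "nat \<Rightarrow> nat"
  rx  :: "nat \<Rightarrow> nat"
  msg :: "nat \<Rightarrow> nat \<Rightarrow> nat list \<Rightarrow> nat"

definition wf_protocol :: "nat \<Rightarrow> protocol \<Rightarrow> bool" where
  "wf_protocol n P \<longleftrightarrow>
     (\<forall>l < len P. tx P l \<in> {1..n} \<and> rx P l \<in> {1..n} \<and> tx P l \<noteq> rx P l)"

definition received :: "protocol \<Rightarrow> nat \<Rightarrow> nat list \<Rightarrow> nat list" where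
  "received P i tr = map (\<lambda>k. tr ! k) (filter (\<lambda>k. rx P k = i) [0..<length tr])"

fun transcript :: "protocol \<Rightarrow> (nat \<Rightarrow> nat) \<Rightarrow> nat \<Rightarrow> nat list" where
  "transcript P x 0 = []"
| "transcript P x (Suc l) =
     (let tr = transcript P x l
      in tr @ [msg P l (x (tx P l)) (received P (tx P l) tr)])"

definition sym :: "protocol \<Rightarrow> (nat \<Rightarrow> nat) \<Rightarrow> nat \<Rightarrow> nat" where
  "sym P x l = transcript P x (Suc l) ! l"

definition inputs :: "nat \<Rightarrow> nat \<Rightarrow> (nat \<Rightarrow> nat) set" where
  "inputs n M = ({1..n} \<rightarrow>\<^sub>E {1..M})"

definition num_vals :: "nat \<Rightarrow> nat \<Rightarrow> protocol \<Rightarrow> nat \<Rightarrow> nat" where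
  "num_vals n M P l = card ((\<lambda>x. sym P x l) ` inputs n M)"

definition complexity :: "nat \<Rightarrow> nat \<Rightarrow> protocol \<Rightarrow> real" where
  "complexity n M P = (\<Sum>l < len P. log 2 (real (num_vals n M P l)))"

definition final_received :: "protocol \<Rightarrow> (nat \<Rightarrow> nat) \<Rightarrow> nat \<Rightarrow> nat list" where
  "final_received P x i = received P i (transcript P x (len P))"

text \<open>Output functions out i xi rcv give the bit EQ_i (True = 1, False = 0).\<close>
definition all_equal :: "nat \<Rightarrow> (nat \<Rightarrow> nat) \<Rightarrow> bool" where
  "all_equal n x \<longleftrightarrow> (\<forall>i\<in>{1..n}. \<forall>j\<in>{1..n}. x i = x j)"

definition solves_AD :: "nat \<Rightarrow> nat \<Rightarrow> protocol \<Rightarrow> bool" where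
  "solves_AD n M P \<longleftrightarrow> wf_protocol n P \<and>
     (\<exists>out :: nat \<Rightarrow> nat \<Rightarrow> nat list \<Rightarrow> bool. \<forall>x \<in> inputs n M.
        ((\<forall>i\<in>{1..n}. \<not> out i (x i) (final_received P x i)) \<longleftrightarrow> all_equal n x))"

definition solves_CD :: "nat \<Rightarrow> nat \<Rightarrow> protocol \<Rightarrow> bool" where
  "solves_CD n M P \<longleftrightarrow> wf_protocol n P \<and>
     (\<exists>out :: nat \<Rightarrow> nat list \<Rightarrow> bool. \<forall>x \<in> inputs n M.
        (\<not> out (x n) (final_received P x n) \<longleftrightarrow> all_equal n x))"

definition C_AD :: "nat \<Rightarrow> nat \<Rightarrow> real" where
  "C_AD n M = Inf (complexity n M ` {P. solves_AD n M P})"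

definition C_CD :: "nat \<Rightarrow> nat \<Rightarrow> real" where
  "C_CD n M = Inf (complexity n M ` {P. solves_CD n M P})"

end

theory Submission
  imports Defs
begin

text \<open>Fix a node \<open>i\<close> and two values \<open>a \<noteq> b\<close>. If the steps incident to \<open>i\<close> carried the same
  symbols on the constant inputs \<open>a\<close> and \<open>b\<close>, then on the input that is \<open>a\<close> at \<open>i\<close> and \<open>b\<close>
  elsewhere, node \<open>i\<close> would see exactly what it sees on the constant input \<open>a\<close> and every other
  node what it sees on the constant input \<open>b\<close>; all nodes would output 0 on an input that is
  not constant. So the symbols on the steps incident to \<open>i\<close> separate the \<open>M\<close> constant inputs,
  and these steps have complexity at least \<open>log M\<close>. Every step is incident to exactly two
  nodes, so summing over the nodes gives \<open>2 C(P) \<ge> n log M\<close> for every AD protocol.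
  A CD protocol is an AD protocol in which only node \<open>n\<close> ever outputs 1, and the protocol in
  which every node sends its input to node \<open>n\<close> solves CD, so both infima range over nonempty
  sets bounded below by \<open>n/2 log M\<close>.\<close>

lemma log_prod:
  fixes f :: "'a \<Rightarrow> real"
  assumes "finite I" and "\<And>i. i \<in> I \<Longrightarrow> f i > 0"
  shows "log b (\<Prod>i\<in>I. f i) = (\<Sum>i\<in>I. log b (f i))"
  unfolding log_def sum_divide_distrib[symmetric]
  using assms by (subst ln_prod) (auto dest: less_imp_neq[symmetric])

lemma card_le_prod_card_if_separating:
  assumes "finite L" and "\<And>k. k \<in> L \<Longrightarrow> finite (S k)"
    and "\<And>k a. k \<in> L \<Longrightarrow> a \<in> A \<Longrightarrow> g k a \<in> S k"
    and "inj_on (\<lambda>a. \<lambda>k\<in>L. g k a) A"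
  shows "card A \<le> (\<Prod>k\<in>L. card (S k))"
proof -
  have "card A = card ((\<lambda>a. \<lambda>k\<in>L. g k a) ` A)"
    using assms(4) by (simp add: card_image)
  also have "\<dots> \<le> card (\<Pi>\<^sub>E k\<in>L. S k)"
    using assms by (intro card_mono) (auto simp: finite_PiE)
  also have "\<dots> = (\<Prod>k\<in>L. card (S k))"
    using assms(1) by (rule card_PiE)
  finally show ?thesis .
qed

lemma length_transcript [simp]: "length (transcript P x l) = l"
  by (induction l) (auto simp: Let_def)

lemma nth_transcript: "k < l \<Longrightarrow> transcript P x l ! k = sym P x k"
  by (induction l) (auto simp: Let_def nth_append sym_def less_Suc_eq)

lemma received_transcript:
  "received P i (transcript P x l) = map (sym P x) (filter (\<lambda>k. rx P k = i) [0..<l])"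
  unfolding received_def by (auto simp: nth_transcript)

definition incident_steps :: "protocol \<Rightarrow> nat \<Rightarrow> nat set" where
  "incident_steps P i = {l. l < len P \<and> (tx P l = i \<or> rx P l = i)}"

lemma finite_incident_steps [simp]: "finite (incident_steps P i)"
  unfolding incident_steps_def by simp

text \<open>Cut and paste: at a step sent by \<open>i\<close>, node \<open>i\<close> holds \<open>x i\<close> and has received what it
  receives on \<open>y\<close>, which is what it receives on \<open>x\<close>; so it sends its symbol on \<open>x\<close>, which
  equals its symbol on \<open>y\<close>.\<close>

lemma transcript_splice:
  assumes agree: "\<forall>l\<in>incident_steps P i. sym P x l = sym P y l"
  shows "l \<le> len P \<Longrightarrow> transcript P (y(i := x i)) l = transcript P y l"
proof (induction l)
  case (Suc l)
  then have "l < len P"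
    by simp
  note IH = Suc.IH[OF less_imp_le[OF this]]
  show ?case
  proof (cases "tx P l = i")
    case True
    with \<open>l < len P\<close> agree have "l \<in> incident_steps P i" "sym P x l = sym P y l"
      by (auto simp: incident_steps_def)
    moreover have "received P i (transcript P x l) = received P i (transcript P y l)"
      using agree \<open>l < len P\<close> by (auto simp: received_transcript incident_steps_def)
    ultimately show ?thesis
      using IH True by (simp add: sym_def Let_def nth_append)
  qed (use IH in \<open>simp add: Let_def\<close>)
qed simp

lemma final_received_splice:
  assumes "\<forall>l\<in>incident_steps P i. sym P x l = sym P y l"
  shows "final_received P (y(i := x i)) j =
           (if j = i then final_received P x i else final_received P y j)"
proof -
  have "final_received P (y(i := x i)) j = final_received P y j"
    unfolding final_received_def using transcript_splice[OF assms] by simp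
  moreover have "final_received P y i = final_received P x i"
    using assms by (auto simp: final_received_def received_transcript incident_steps_def)
  ultimately show ?thesis by simp
qed

definition const_input :: "nat \<Rightarrow> nat \<Rightarrow> nat \<Rightarrow> nat" where
  "const_input n a = (\<lambda>j\<in>{1..n}. a)"

lemma const_input_in_inputs: "a \<in> {1..M} \<Longrightarrow> const_input n a \<in> inputs n M"
  by (auto simp: const_input_def inputs_def)

lemma finite_inputs [simp]: "finite (inputs n M)"
  by (simp add: inputs_def finite_PiE)

lemma all_equal_const_input: "all_equal n (const_input n a)"
  by (simp add: all_equal_def const_input_def)

lemma incident_steps_separate_const_inputs:
  assumes sol: "solves_AD n M P" and "n \<ge> 2" and i: "i \<in> {1..n}"
    and a: "a \<in> {1..M}" and b: "b \<in> {1..M}"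
    and agree: "\<forall>l\<in>incident_steps P i. sym P (const_input n a) l = sym P (const_input n b) l"
  shows "a = b"
proof -
  define x where "x = const_input n a"
  define y where "y = const_input n b"
  define z where "z = y(i := x i)"
  obtain out where out: "\<And>w. w \<in> inputs n M \<Longrightarrow>
      (\<forall>j\<in>{1..n}. \<not> out j (w j) (final_received P w j)) \<longleftrightarrow> all_equal n w"
    using sol unfolding solves_AD_def by blast
  have "\<not> out j (w j) (final_received P w j)"
    if "w \<in> {x, y}" "j \<in> {1..n}" for w j
    using that out[of w] a b const_input_in_inputs all_equal_const_input
    unfolding x_def y_def by blast
  then have "\<forall>j\<in>{1..n}. \<not> out j (z j) (final_received P z j)"
    using agree by (simp add: z_def final_received_splice x_def y_def)
  moreover have "z \<in> inputs n M"
    using a b i by (auto simp: z_def x_def y_def const_input_def inputs_def)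
  ultimately have "all_equal n z"
    using out by blast
  moreover define j :: nat where "j = (if i = 1 then 2 else 1)"
  then have "j \<in> {1..n}" "j \<noteq> i"
    using \<open>n \<ge> 2\<close> by auto
  ultimately have "z i = z j"
    using i unfolding all_equal_def by blast
  then show "a = b"
    using i \<open>j \<in> {1..n}\<close> \<open>j \<noteq> i\<close> by (simp add: z_def x_def y_def const_input_def)
qed

lemma num_vals_pos: "M \<ge> 1 \<Longrightarrow> num_vals n M P l > 0"
  unfolding num_vals_def using const_input_in_inputs[of 1 M n] by (auto simp: card_gt_0_iff)

lemma log_le_incident_complexity:
  assumes sol: "solves_AD n M P" and n: "n \<ge> 2" and i: "i \<in> {1..n}" and M: "M \<ge> 1"
  shows "log 2 (real M) \<le> (\<Sum>l\<in>incident_steps P i. log 2 (real (num_vals n M P l)))"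
proof -
  have "inj_on (\<lambda>a. \<lambda>l\<in>incident_steps P i. sym P (const_input n a) l) {1..M}"
    using incident_steps_separate_const_inputs[OF sol n i]
    by (intro inj_onI) (metis restrict_apply')
  then have "card {1..M} \<le> (\<Prod>l\<in>incident_steps P i. num_vals n M P l)"
    unfolding num_vals_def
    by (intro card_le_prod_card_if_separating)
      (auto intro!: imageI const_input_in_inputs)
  then have "real M \<le> (\<Prod>l\<in>incident_steps P i. real (num_vals n M P l))"
    by (metis card_atLeastAtMost diff_Suc_1 of_nat_le_iff of_nat_prod)
  with M have "log 2 (real M) \<le> log 2 (\<Prod>l\<in>incident_steps P i. real (num_vals n M P l))"
    by simp
  also have "\<dots> = (\<Sum>l\<in>incident_steps P i. log 2 (real (num_vals n M P l)))"
    using num_vals_pos[OF M] by (intro log_prod) auto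
  finally show ?thesis .
qed

lemma sum_incident_steps:
  fixes f :: "nat \<Rightarrow> 'a :: comm_semiring_1"
  assumes "wf_protocol n P"
  shows "(\<Sum>i\<in>{1..n}. \<Sum>l\<in>incident_steps P i. f l) = 2 * (\<Sum>l<len P. f l)"
proof -
  have "(\<Sum>i\<in>{1..n}. \<Sum>l\<in>incident_steps P i. f l)
      = (\<Sum>l<len P. \<Sum>i\<in>{i. i \<in> {1..n} \<and> (tx P l = i \<or> rx P l = i)}. f l)"
    unfolding incident_steps_def lessThan_def[symmetric]
    using sum.swap_restrict[of "{1..n}" "{..<len P}" "\<lambda>_. f"] by simp
  also have "\<dots> = (\<Sum>l<len P. 2 * f l)"
  proof (rule sum.cong)
    fix l assume "l \<in> {..<len P}"
    with assms have "{i. i \<in> {1..n} \<and> (tx P l = i \<or> rx P l = i)} = {tx P l, rx P l}"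
      and "tx P l \<noteq> rx P l"
      by (auto simp: wf_protocol_def)
    then show "(\<Sum>i\<in>{i. i \<in> {1..n} \<and> (tx P l = i \<or> rx P l = i)}. f l) = 2 * f l"
      by (simp add: mult_2)
  qed simp
  finally show ?thesis
    by (simp add: sum_distrib_left)
qed

lemma AD_complexity_lower_bound:
  assumes sol: "solves_AD n M P" and "n \<ge> 2" and "M \<ge> 1"
  shows "real n / 2 * log 2 (real M) \<le> complexity n M P"
proof -
  have "real n * log 2 (real M)
      \<le> (\<Sum>i\<in>{1..n}. \<Sum>l\<in>incident_steps P i. log 2 (real (num_vals n M P l)))"
    using sum_mono[of "{1..n}", OF log_le_incident_complexity[OF sol assms(2) _ assms(3)]]
    by simp
  also have "\<dots> = 2 * complexity n M P"
    using sol sum_incident_steps unfolding solves_AD_def complexity_def by blast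
  finally show ?thesis by simp
qed

lemma solves_CD_imp_solves_AD:
  assumes "n \<ge> 1" and "solves_CD n M P"
  shows "solves_AD n M P"
proof -
  obtain out where "\<forall>x\<in>inputs n M. \<not> out (x n) (final_received P x n) \<longleftrightarrow> all_equal n x"
    and "wf_protocol n P"
    using assms(2) unfolding solves_CD_def by blast
  moreover have "(\<forall>i\<in>{1..n}. \<not> (i = n \<and> out (x i) (final_received P x i)))
      \<longleftrightarrow> \<not> out (x n) (final_received P x n)" for x
    using assms(1) by auto
  ultimately show ?thesis
    unfolding solves_AD_def by (intro conjI exI[of _ "\<lambda>i v r. i = n \<and> out v r"]) auto
qed

definition star_protocol :: "nat \<Rightarrow> protocol" where
  "star_protocol n = \<lparr>len = n - 1, tx = Suc, rx = (\<lambda>_. n), msg = (\<lambda>_ v _. v)\<rparr>"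

lemma transcript_star_protocol: "transcript (star_protocol n) x l = map (\<lambda>k. x (Suc k)) [0..<l]"
  by (induction l) (auto simp: star_protocol_def Let_def)

lemma set_final_received_star_protocol:
  "set (final_received (star_protocol n) x n) = x ` {1..n - 1}"
proof -
  have "final_received (star_protocol n) x n = map (\<lambda>k. x (Suc k)) [0..<n - 1]"
    unfolding final_received_def received_def transcript_star_protocol
    by (simp add: star_protocol_def)
  then have "set (final_received (star_protocol n) x n) = x ` Suc ` {..<n - 1}"
    by (simp add: image_image atLeast0LessThan)
  then show ?thesis
    by (simp only: image_Suc_lessThan)
qed

lemma solves_CD_star_protocol:
  assumes "n \<ge> 1"
  shows "solves_CD n M (star_protocol n)"
proof -
  have "wf_protocol n (star_protocol n)"
    by (auto simp: wf_protocol_def star_protocol_def)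
  moreover have "(\<forall>u\<in>x ` {1..n - 1}. u = x n) \<longleftrightarrow> all_equal n x" for x :: "nat \<Rightarrow> nat"
  proof -
    have "{1..n} = insert n {1..n - 1}"
      using assms by auto
    then show ?thesis
      unfolding all_equal_def by auto
  qed
  ultimately show ?thesis
    unfolding solves_CD_def
    by (intro conjI exI[of _ "\<lambda>v r. \<exists>u\<in>set r. u \<noteq> v"])
      (auto simp: set_final_received_star_protocol)
qed

theorem mainTheorem6:
  fixes n M :: nat
  assumes "n \<ge> 2" and "M \<ge> 1"
  shows "C_CD n M \<ge> C_AD n M \<and> C_AD n M \<ge> real n / 2 * log 2 (real M)"
proof -
  let ?CD = "complexity n M ` {P. solves_CD n M P}"
  let ?AD = "complexity n M ` {P. solves_AD n M P}"
  have CD_nonempty: "?CD \<noteq> {}"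
    using solves_CD_star_protocol[of n M] assms(1) by auto
  have CD_AD: "?CD \<subseteq> ?AD"
    using solves_CD_imp_solves_AD[of n M] assms(1) by auto
  have lower: "\<And>c. c \<in> ?AD \<Longrightarrow> real n / 2 * log 2 (real M) \<le> c"
    using AD_complexity_lower_bound[OF _ assms] by blast
  have "C_AD n M \<le> C_CD n M"
    unfolding C_CD_def C_AD_def using CD_nonempty bdd_belowI[OF lower] CD_AD
    by (rule cInf_superset_mono)
  moreover have "real n / 2 * log 2 (real M) \<le> C_AD n M"
    unfolding C_AD_def using CD_nonempty CD_AD lower by (intro cInf_greatest) auto
  ultimately show ?thesis
    by simp
qed

end
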